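(* Let $d>0$ and let $I\subseteq\mathbb{R}$ be a nonempty, non-singleton interval with $\ell(I)\geq d$. (1) Let $g: I\to\mathbb{R}$ be increasing and $k: I\to\mathbb{R}$ bounded, such that $\mathscr{H}_{x_d}(g)\geq\mathscr{H}(k)$ for every $x\in I$. Then both $g+k$ and $g-k$ are $d$-periodically increasing. (2) Conversely, suppose $\ell(I)>2d$ and let $f: I\to\mathbb{R}$ be $d$-periodically increasing such that there is $l>0$ with $f(x+nd)-f(x+(n-1)d)=l$ for all $x\in I$ and $n\in\mathbb{N}$ with $x+(n-1)d,\ x+nd\in I$. Then $f=g+h$ where $g: I\to\mathbb{R}$ is increasing and $h: I\to\mathbb{R}$ is periodic with period $d$, i.e. $h(x+d)=h(x)$ whenever $x,x+d\in I$.
   Context: $\ell(I)$ denotes the length of $I$. A function $f: I\to\mathbb{R}$ is $d$-periodically increasing if $f(x)\leq f(y)$ for all $x,y\in I$ with $y-x\geq d$. For $x\in I$ and $I_d=[x,x+d]\cap I$, the extended height is $\mathscr{H}_{x_d}(f)=\sup_{u,v\in I_d}|f(u)-f(v)|$, and the height is $\mathscr{H}(f)=\sup_{u,v\in I}|f(u)-f(v)|$. *)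

theory Defs
  imports "HOL-Analysis.Analysis"
begin

definition interval_length :: "real set \<Rightarrow> ereal" where
  "interval_length I = Sup (ereal ` I) - Inf (ereal ` I)"

definition d_periodically_increasing :: "real \<Rightarrow> real set \<Rightarrow> (real \<Rightarrow> real) \<Rightarrow> bool" where
  "d_periodically_increasing d I f \<longleftrightarrow>
     (\<forall>x\<in>I. \<forall>y\<in>I. y - x \<ge> d \<longrightarrow> f x \<le> f y)"

definition height_on :: "real set \<Rightarrow> (real \<Rightarrow> real) \<Rightarrow> ereal" where
  "height_on A f = (SUP u\<in>A. SUP v\<in>A. ereal \<bar>f u - f v\<bar>)"

definition ext_height :: "real \<Rightarrow> real set \<Rightarrow> real \<Rightarrow> (real \<Rightarrow> real) \<Rightarrow> ereal" where
  "ext_height d I x f = height_on ({x..x+d} \<inter> I) f"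

end

theory Submission
  imports Defs
begin

text \<open>For (1): if \<open>y - x \<ge> d\<close> then \<open>[x, x + d] \<inter> I\<close> lies between \<open>x\<close> and \<open>y\<close>, so the
  extended height of the increasing \<open>g\<close> at \<open>x\<close> is at most \<open>g y - g x\<close>; the hypothesis then
  gives \<open>\<bar>k x - k y\<bar> \<le> g y - g x\<close>, and the increase of \<open>g\<close> absorbs the oscillation of \<open>\<plusminus>k\<close>.
  For (2): a constant increment \<open>l\<close> over every step of length \<open>d\<close> makes
  \<open>f x - l x / d\<close> \<open>d\<close>-periodic, while \<open>l x / d\<close> is increasing.\<close>

lemma abs_diff_le_height_on:
  assumes "u \<in> A" "v \<in> A"
  shows "ereal \<bar>k u - k v\<bar> \<le> height_on A k"
  unfolding height_on_def using assms by (blast intro: SUP_upper2)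

lemma height_on_le_increment:
  assumes g: "mono_on I g" and "x \<in> I" "y \<in> I" and A: "A \<subseteq> I \<inter> {x..y}"
  shows "height_on A g \<le> ereal (g y - g x)"
  unfolding height_on_def
proof (intro SUP_least)
  fix u v assume "u \<in> A" "v \<in> A"
  with A have "u \<in> I" "v \<in> I" "x \<le> u" "u \<le> y" "x \<le> v" "v \<le> y" by auto
  with assms have "g x \<le> g u" "g u \<le> g y" "g x \<le> g v" "g v \<le> g y"
    by (auto intro: mono_onD[OF g])
  then show "ereal \<bar>g u - g v\<bar> \<le> ereal (g y - g x)" by simp
qed

lemma height_on_uminus: "height_on A (\<lambda>x. - k x) = height_on A k"
  unfolding height_on_def by (simp add: abs_minus_commute)

lemma abs_diff_le_increment_of_height_le:
  assumes g: "mono_on I g"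
    and height: "\<forall>x\<in>I. ext_height d I x g \<ge> height_on I k"
    and xy: "x \<in> I" "y \<in> I" "y - x \<ge> d"
  shows "\<bar>k x - k y\<bar> \<le> g y - g x"
proof -
  have "ereal \<bar>k x - k y\<bar> \<le> height_on I k"
    by (rule abs_diff_le_height_on[OF xy(1,2)])
  also have "\<dots> \<le> ext_height d I x g"
    using height xy by blast
  also have "\<dots> \<le> ereal (g y - g x)"
    unfolding ext_height_def using xy by (intro height_on_le_increment[OF g]) auto
  finally show ?thesis by simp
qed

lemma d_periodically_increasing_add_of_height_le:
  assumes "mono_on I g" and "\<forall>x\<in>I. ext_height d I x g \<ge> height_on I k"
  shows "d_periodically_increasing d I (\<lambda>x. g x + k x)"
  unfolding d_periodically_increasing_def
proof (intro ballI impI)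
  fix x y assume "x \<in> I" "y \<in> I" "d \<le> y - x"
  from abs_diff_le_increment_of_height_le[OF assms this]
  show "g x + k x \<le> g y + k y" by linarith
qed

lemma linear_plus_periodic_decomposition:
  fixes f :: "real \<Rightarrow> real"
  assumes d: "d > 0" and l: "l \<ge> 0"
    and step: "\<And>x. x \<in> I \<Longrightarrow> x + d \<in> I \<Longrightarrow> f (x + d) - f x = l"
  shows "mono_on I (\<lambda>x. l * x / d)"
    and "\<And>x. x \<in> I \<Longrightarrow> x + d \<in> I \<Longrightarrow> f (x + d) - l * (x + d) / d = f x - l * x / d"
proof -
  show "mono_on I (\<lambda>x. l * x / d)"
    using d l by (intro mono_onI) (simp add: divide_right_mono mult_left_mono)
  fix x assume "x \<in> I" "x + d \<in> I"
  moreover have "l * (x + d) / d = l * x / d + l"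
    using d by (simp add: field_simps)
  ultimately show "f (x + d) - l * (x + d) / d = f x - l * x / d"
    using step by fastforce
qed

text \<open>Part (2) only uses the increment condition for \<open>n = 1\<close>.\<close>

theorem theorem3p1:
  fixes d :: real and I :: "real set"
  assumes d_pos: "d > 0"
    and I_interval: "is_interval I"
    and I_nonsingleton: "\<exists>a\<in>I. \<exists>b\<in>I. a \<noteq> b"
    and I_len: "interval_length I \<ge> ereal d"
  shows
    "(\<forall>g k :: real \<Rightarrow> real.
        mono_on I g \<and> (\<exists>B. \<forall>x\<in>I. \<bar>k x\<bar> \<le> B) \<and>
        (\<forall>x\<in>I. ext_height d I x g \<ge> height_on I k)
        \<longrightarrow> d_periodically_increasing d I (\<lambda>x. g x + k x) \<and>
            d_periodically_increasing d I (\<lambda>x. g x - k x))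
     \<and>
     (interval_length I > ereal (2 * d) \<longrightarrow>
       (\<forall>f :: real \<Rightarrow> real.
          d_periodically_increasing d I f \<and>
          (\<exists>l > 0. \<forall>x\<in>I. \<forall>n::nat. n \<ge> 1 \<longrightarrow>
              x + (real n - 1) * d \<in> I \<longrightarrow> x + real n * d \<in> I \<longrightarrow>
              f (x + real n * d) - f (x + (real n - 1) * d) = l)
          \<longrightarrow> (\<exists>g h :: real \<Rightarrow> real.
                 mono_on I g \<and>
                 (\<forall>x. x \<in> I \<longrightarrow> x + d \<in> I \<longrightarrow> h (x + d) = h x) \<and>
                 (\<forall>x\<in>I. f x = g x + h x))))"
proof (intro conjI allI impI; elim conjE exE)
  fix g k :: "real \<Rightarrow> real"
  assume g: "mono_on I g" and height: "\<forall>x\<in>I. ext_height d I x g \<ge> height_on I k"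
  show "d_periodically_increasing d I (\<lambda>x. g x + k x)"
    using g height by (rule d_periodically_increasing_add_of_height_le)
  show "d_periodically_increasing d I (\<lambda>x. g x - k x)"
    using d_periodically_increasing_add_of_height_le[OF g, of "\<lambda>x. - k x"] height
    by (simp add: height_on_uminus)
next
  fix f :: "real \<Rightarrow> real" and l :: real
  assume "l > 0" and increment: "\<forall>x\<in>I. \<forall>n::nat. n \<ge> 1 \<longrightarrow>
              x + (real n - 1) * d \<in> I \<longrightarrow> x + real n * d \<in> I \<longrightarrow>
              f (x + real n * d) - f (x + (real n - 1) * d) = l"
  have step: "f (x + d) - f x = l" if "x \<in> I" "x + d \<in> I" for x
    using increment[rule_format, OF that(1), of 1] that by simp
  from linear_plus_periodic_decomposition[of d l I f, OF d_pos less_imp_le[OF \<open>l > 0\<close>] step]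
  show "\<exists>g h :: real \<Rightarrow> real. mono_on I g \<and>
          (\<forall>x. x \<in> I \<longrightarrow> x + d \<in> I \<longrightarrow> h (x + d) = h x) \<and> (\<forall>x\<in>I. f x = g x + h x)"
    by (intro exI[of _ "\<lambda>x. l * x / d"] exI[of _ "\<lambda>x. f x - l * x / d"]) auto
qed

end
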